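(* Let $4\le p\le n-1$ and let $S\subset V$ with $0,n\in S$. The min-cut inequality $x((S:V\setminus S))\ge 1$ is valid for $P^p_{0,n}(D)$ if and only if $|S|\le p$, and it is facet defining for $P^p_{0,n}(D)$ if and only if $3\le |S|\le p$ and $|V\setminus S|\ge 2$.
   Context: Let $n$ be a positive integer, $V=\{0,1,\dots,n\}$, and let $D=(V,A)$ be the digraph whose arc set $A$ consists of all ordered pairs $(i,j)$ with $i\neq j$, $i,j\in V$, except that no arc enters node $0$, no arc leaves node $n$, and the arc $(0,n)$ is absent. A $(0,n)$-$p$-path is a simple directed path in $D$ from $0$ to $n$ with exactly $p$ arcs. $P^p_{0,n}(D)\subseteq\mathbb{R}^A$ is the convex hull of the incidence vectors of all $(0,n)$-$p$-paths. For $F\subseteq A$, $x(F)=\sum_{(i,j)\in F}x_{ij}$. For node sets $S,T$, $(S:T)=\{(i,j)\in A: i\in S, j\in T\}$. Facet defining means valid and defining a face of dimension $\dim P^p_{0,n}(D)-1$. *)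

theory Defs
  imports "HOL-Analysis.Analysis" "HOL-Library.Function_Algebras"
begin

text \<open>Real-valued functions on an index type form a real vector space (pointwise).
  We model R^A as functions (nat \<times> nat) \<Rightarrow> real; all incidence vectors vanish outside A.\<close>

instantiation "fun" :: (type, real_vector) real_vector
begin
definition scaleR_fun :: "real \<Rightarrow> ('a \<Rightarrow> 'b) \<Rightarrow> 'a \<Rightarrow> 'b"
  where "scaleR_fun c f = (\<lambda>x. c *\<^sub>R f x)"
instance
  by standard (auto simp: scaleR_fun_def fun_eq_iff scaleR_add_right scaleR_add_left)
end

definition affdim :: "'a::real_vector set \<Rightarrow> int" where
  "affdim X = int (GREATEST k. \<exists>T. T \<subseteq> X \<and> finite T \<and> \<not> affine_dependent T \<and> card T = k) - 1"

text \<open>Node set V = {0..n} and arc set A of the digraph D.\<close>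
definition arcs :: "nat \<Rightarrow> (nat \<times> nat) set" where
  "arcs n = {(i, j). i \<le> n \<and> j \<le> n \<and> i \<noteq> j \<and> j \<noteq> 0 \<and> i \<noteq> n \<and> (i, j) \<noteq> (0, n)}"

definition is_pPath :: "nat \<Rightarrow> nat \<Rightarrow> nat list \<Rightarrow> bool" where
  "is_pPath n p vs \<longleftrightarrow> length vs = p + 1 \<and> distinct vs \<and> hd vs = 0 \<and> last vs = n \<and>
     set (zip vs (tl vs)) \<subseteq> arcs n"

definition path_arcs :: "nat list \<Rightarrow> (nat \<times> nat) set" where
  "path_arcs vs = set (zip vs (tl vs))"

definition incidence :: "(nat \<times> nat) set \<Rightarrow> (nat \<times> nat) \<Rightarrow> real" where
  "incidence F = (\<lambda>a. if a \<in> F then 1 else 0)"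

definition pPathPolytope :: "nat \<Rightarrow> nat \<Rightarrow> ((nat \<times> nat) \<Rightarrow> real) set" where
  "pPathPolytope n p = convex hull {incidence (path_arcs vs) | vs. is_pPath n p vs}"

definition xsum :: "(nat \<times> nat) set \<Rightarrow> ((nat \<times> nat) \<Rightarrow> real) \<Rightarrow> real" where
  "xsum F x = (\<Sum>a\<in>F. x a)"

definition cut :: "nat \<Rightarrow> nat set \<Rightarrow> nat set \<Rightarrow> (nat \<times> nat) set" where
  "cut n S T = {(i, j) \<in> arcs n. i \<in> S \<and> j \<in> T}"

definition valid_ineq :: "((nat \<times> nat) \<Rightarrow> real) set \<Rightarrow> (nat \<times> nat) set \<Rightarrow> real \<Rightarrow> bool" where
  "valid_ineq P F b \<longleftrightarrow> (\<forall>x\<in>P. xsum F x \<ge> b)"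

definition facet_defining :: "((nat \<times> nat) \<Rightarrow> real) set \<Rightarrow> (nat \<times> nat) set \<Rightarrow> real \<Rightarrow> bool" where
  "facet_defining P F b \<longleftrightarrow> valid_ineq P F b \<and>
     affdim (P \<inter> {x. xsum F x = b}) = affdim P - 1"

end

(* On a (0,n)-p-path the cut value x((S : V - S)) counts how often the path leaves S. A path
   starts and ends in S, so it leaves S at least once unless all of its p + 1 nodes lie in S;
   hence the inequality is valid exactly when |S| <= p. If S = {0, n}, every path leaves S exactly
   once and the inequality is an equation on the whole polytope. For 3 <= |S| <= p we use the
   dual facet criterion: let w be arc weights whose sum is the same on all paths leaving S once.
   Exchanging a single node, or the order of two adjacent nodes, between two such paths gives
   linear relations among the weights; after subtracting a suitable multiple of the indicator of
   the cut they force w(i,j) = pi(j) - pi(i) + beta for a node potential pi. Hence on every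
   p-path the weight is an affine function of the number of times the path leaves S. *)

theory Submission
  imports Defs
begin

section \<open>Affine dimension and hyperplane sections\<close>

lemma card_affine_independent_le:
  fixes T :: "'a::real_vector set"
  assumes "finite B" and "finite T" and "\<not> affine_dependent T"
    and "\<forall>y\<in>T. y - a \<in> span B"
  shows "card T \<le> card B + 1"
proof (cases "T = {}")
  case False
  then obtain t where t: "t \<in> T" by blast
  let ?D = "(\<lambda>x. -t + x) ` (T - {t})"
  have "insert t (T - {t}) = T" using t by blast
  then have "independent ?D"
    using affine_dependent_iff_dependent[of t "T - {t}"] assms(3) by simp
  moreover have "?D \<subseteq> span B"
  proof
    fix v assume "v \<in> ?D"
    then obtain x where "x \<in> T" "v = (x - a) - (t - a)" by auto
    then show "v \<in> span B" using assms(4) t real_vector.span_diff by metis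
  qed
  ultimately have "card ?D \<le> card B"
    using real_vector.independent_span_bound[OF assms(1)] by blast
  moreover have "card ?D = card T - 1"
    using t by (simp add: card_image inj_on_def)
  ultimately show ?thesis by linarith
qed simp

lemma affdim_eq_card:
  fixes Y :: "'a::real_vector set"
  assumes "a \<in> Y" and "finite B" and "independent B" and "(+) a ` B \<subseteq> Y"
    and "\<forall>y\<in>Y. y - a \<in> span B"
  shows "affdim Y = int (card B)"
proof -
  let ?P = "\<lambda>k. \<exists>T. T \<subseteq> Y \<and> finite T \<and> \<not> affine_dependent T \<and> card T = k"
  have "(GREATEST k. ?P k) = card B + 1"
  proof (rule Greatest_equality)
    have "0 \<notin> B" using assms(3) real_vector.dependent_zero by blast
    then have a: "a \<notin> (+) a ` B" by auto
    have "(\<lambda>x. -a + x) ` (+) a ` B = B" by (auto simp: image_image)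
    then have "\<not> affine_dependent (insert a ((+) a ` B))"
      using affine_dependent_iff_dependent[OF a] assms(3) by simp
    moreover have "card (insert a ((+) a ` B)) = card B + 1"
      using a assms(2) by (simp add: card_image)
    ultimately show "?P (card B + 1)"
      using assms(1,2,4) by (intro exI[of _ "insert a ((+) a ` B)"]) auto
  next
    fix k assume "?P k"
    then show "k \<le> card B + 1"
      using card_affine_independent_le[OF assms(2)] assms(5) by blast
  qed
  then show ?thesis unfolding affdim_def by simp
qed

lemma convex_hull_subset_translated_span:
  assumes "\<forall>x\<in>X. x - a \<in> span B"
  shows "convex hull X \<subseteq> (+) a ` span B"
proof (rule hull_minimal)
  show "X \<subseteq> (+) a ` span B"
    using assms by (force intro: image_eqI[where x = "_ - a"])
  show "convex ((+) a ` span B)"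
    by (intro convex_translation subspace_imp_convex real_vector.subspace_span)
qed

lemma linear_functional_vanishing_on_span:
  fixes z :: "'a::real_vector"
  assumes "z \<notin> span B"
  obtains g :: "'a \<Rightarrow> real" where "linear g" "\<And>v. v \<in> span B \<Longrightarrow> g v = 0" "g z = 1"
proof -
  obtain B0 where B0: "B0 \<subseteq> B" "independent B0" "B \<subseteq> span B0"
    using real_vector.maximal_independent_subset by blast
  have span_eq: "span B0 = span B"
  proof
    show "span B0 \<subseteq> span B" using B0(1) by (rule real_vector.span_mono)
    show "span B \<subseteq> span B0"
      using B0(3) real_vector.subspace_span by (rule real_vector.span_minimal)
  qed
  then have "independent (insert z B0)"
    using assms B0(2) real_vector.independent_insertI by blast
  from real_vector.linear_independent_extend[OF this, of "\<lambda>v. if v = z then 1 else 0"]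
  obtain g :: "'a \<Rightarrow> real" where g: "linear g" "\<forall>v\<in>insert z B0. g v = (if v = z then 1 else 0)"
    by blast
  have "z \<notin> B0"
    using assms B0(1) real_vector.span_base by blast
  then have "\<forall>v\<in>B0. g v = 0"
    using g(2) by auto
  then have "v \<in> span B \<Longrightarrow> g v = 0" for v
    using real_vector.linear_eq_0_on_span[OF g(1)] span_eq by blast
  then show thesis using that g by simp
qed

lemma affdim_convex_hull_eq_card:
  fixes X :: "'a::real_vector set"
  assumes "a \<in> X" and "finite B" and "independent B" and "(+) a ` B \<subseteq> X"
    and "\<forall>x\<in>X. x - a \<in> span B"
  shows "affdim (convex hull X) = int (card B)"
proof (rule affdim_eq_card)
  show "a \<in> convex hull X"
    using assms(1) by (rule hull_inc)
  show "(+) a ` B \<subseteq> convex hull X"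
    using assms(4) hull_subset[of X convex] by (rule subset_trans)
  show "\<forall>y\<in>convex hull X. y - a \<in> span B"
    using convex_hull_subset_translated_span[OF assms(5)] by auto
qed (fact assms)+

lemma span_insert_Int_kernel:
  fixes l :: "'a::real_vector \<Rightarrow> real"
  assumes "linear l" and "\<forall>v\<in>span B. l v = 0" and "l d \<noteq> 0"
  shows "span (insert d B) \<inter> {v. l v = 0} \<subseteq> span B"
proof
  fix v assume v: "v \<in> span (insert d B) \<inter> {v. l v = 0}"
  then obtain k where k: "v - k *\<^sub>R d \<in> span B"
    using real_vector.span_breakdown_eq by blast
  then have "l (v - k *\<^sub>R d) = 0"
    using assms(2) by blast
  then have "l v - k * l d = 0"
    using assms(1) by (simp add: linear_diff linear_scale)
  then have "k = 0" using v assms(3) by simp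
  then show "v \<in> span B" using k by simp
qed

lemma affdim_hyperplane_section_eq_card:
  fixes X :: "'a::real_vector set" and l :: "'a \<Rightarrow> real"
  assumes "linear l" and "a \<in> X" and "l a = 1" and "finite B" and "independent B"
    and "(+) a ` B \<subseteq> X" and "\<forall>v\<in>span B. l v = 0" and "l d \<noteq> 0"
    and "\<forall>x\<in>X. x - a \<in> span (insert d B)"
  shows "affdim (convex hull X \<inter> {x. l x = 1}) = int (card B)"
proof (rule affdim_eq_card[OF _ assms(4,5)])
  show "a \<in> convex hull X \<inter> {x. l x = 1}"
    using assms(2,3) hull_inc by auto
  have "\<forall>b\<in>B. l b = 0"
    using assms(7) real_vector.span_base by blast
  then have "(+) a ` B \<subseteq> {x. l x = 1}"
    using assms(1,3) by (auto simp: linear_add)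
  then show "(+) a ` B \<subseteq> convex hull X \<inter> {x. l x = 1}"
    using assms(6) hull_subset[of X convex] by auto
  have "y - a \<in> span (insert d B) \<inter> {v. l v = 0}" if "y \<in> convex hull X \<inter> {x. l x = 1}" for y
    using that convex_hull_subset_translated_span[OF assms(9)] assms(1,3)
    by (auto simp: linear_diff)
  then show "\<forall>y\<in>convex hull X \<inter> {x. l x = 1}. y - a \<in> span B"
    using span_insert_Int_kernel[OF assms(1,7,8)] by blast
qed

lemma affdim_hyperplane_section_spanning:
  fixes X :: "'a::real_vector set" and l :: "'a \<Rightarrow> real"
  assumes "finite X" and "linear l" and "a \<in> X" and "l a = 1" and "x1 \<in> X" and "l x1 \<noteq> 1"
    and spans: "\<forall>z\<in>X. z - a \<in> span (insert (x1 - a) ((\<lambda>y. y - a) ` {y\<in>X. l y = 1}))"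
  shows "affdim (convex hull X \<inter> {x. l x = 1}) = affdim (convex hull X) - 1"
proof -
  define V where "V = (\<lambda>y. y - a) ` {y\<in>X. l y = 1}"
  obtain B where B: "B \<subseteq> V" "independent B" "V \<subseteq> span B"
    using real_vector.maximal_independent_subset by blast
  have "finite B"
    using B(1) by (rule finite_subset) (simp add: V_def assms(1))
  have B_X: "(+) a ` B \<subseteq> X"
    using B(1) by (auto simp: V_def)
  have "\<forall>v\<in>B. l v = 0"
    using B(1) assms(2,4) by (auto simp: V_def linear_diff)
  then have l_span: "\<forall>v\<in>span B. l v = 0"
    using real_vector.linear_eq_0_on_span[OF assms(2)] by blast
  have l_x1: "l (x1 - a) \<noteq> 0"
    using assms(2,4,6) by (simp add: linear_diff)
  then have "x1 - a \<notin> span B"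
    using l_span by blast
  have "insert (x1 - a) V \<subseteq> span (insert (x1 - a) B)"
    using B(3) real_vector.span_mono[of B "insert (x1 - a) B"] real_vector.span_base by blast
  then have "span (insert (x1 - a) V) \<subseteq> span (insert (x1 - a) B)"
    using real_vector.subspace_span by (rule real_vector.span_minimal)
  then have X_span: "\<forall>z\<in>X. z - a \<in> span (insert (x1 - a) B)"
    using spans unfolding V_def by blast
  have "affdim (convex hull X) = int (card (insert (x1 - a) B))"
    using assms(3,5) \<open>finite B\<close> B_X X_span B(2) \<open>x1 - a \<notin> span B\<close>
    by (intro affdim_convex_hull_eq_card real_vector.independent_insertI) auto
  moreover have "x1 - a \<notin> B"
    using \<open>x1 - a \<notin> span B\<close> real_vector.span_base by blast
  moreover have "affdim (convex hull X \<inter> {x. l x = 1}) = int (card B)"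
    using assms(2-4) \<open>finite B\<close> B(2) B_X l_span l_x1 X_span
    by (rule affdim_hyperplane_section_eq_card)
  ultimately show ?thesis
    using \<open>finite B\<close> by simp
qed

lemma affdim_hyperplane_section:
  fixes X :: "'a::real_vector set" and l :: "'a \<Rightarrow> real"
  assumes "finite X" and "linear l" and "a \<in> X" and "l a = 1" and "x1 \<in> X" and "l x1 \<noteq> 1"
    and equations: "\<And>g K. linear g \<Longrightarrow> (\<forall>y\<in>X. l y = 1 \<longrightarrow> g y = K) \<Longrightarrow>
      \<exists>C \<mu>. \<forall>y\<in>X. g y = C + \<mu> * l y"
  shows "affdim (convex hull X \<inter> {x. l x = 1}) = affdim (convex hull X) - 1"
proof (rule affdim_hyperplane_section_spanning[OF assms(1-6)], rule ballI, rule ccontr)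
  let ?W = "insert (x1 - a) ((\<lambda>y. y - a) ` {y\<in>X. l y = 1})"
  fix z assume z: "z \<in> X" and not_spanned: "z - a \<notin> span ?W"
  from not_spanned obtain g :: "'a \<Rightarrow> real"
    where g: "linear g" "\<And>v. v \<in> span ?W \<Longrightarrow> g v = 0" "g (z - a) = 1"
    by (rule linear_functional_vanishing_on_span) auto
  have "g (y - a) = 0" if "y \<in> X" "l y = 1" for y
    using that by (intro g(2) real_vector.span_base) auto
  then have "\<forall>y\<in>X. l y = 1 \<longrightarrow> g y = g a"
    using g(1) by (simp add: linear_diff)
  then obtain C \<mu> where C: "\<forall>y\<in>X. g y = C + \<mu> * l y"
    using equations[OF g(1)] by blast
  have "g (x1 - a) = 0"
    by (intro g(2) real_vector.span_base) simp
  then have "\<mu> * (l x1 - 1) = 0"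
    using C assms(3-5) g(1) by (simp add: linear_diff algebra_simps)
  then have "\<mu> = 0" using assms(6) by simp
  then have "g (z - a) = 0"
    using C z assms(3) g(1) by (simp add: linear_diff)
  then show False using g(3) by simp
qed

section \<open>Arc weights along node sequences\<close>

definition arc_sum :: "(nat \<times> nat \<Rightarrow> real) \<Rightarrow> nat list \<Rightarrow> real" where
  "arc_sum f vs = sum_list (map f (zip vs (tl vs)))"

lemma arc_sum_Nil [simp]: "arc_sum f [] = 0"
  and arc_sum_singleton [simp]: "arc_sum f [v] = 0"
  and arc_sum_Cons_Cons [simp]: "arc_sum f (u # v # vs) = f (u, v) + arc_sum f (v # vs)"
  by (simp_all add: arc_sum_def)

lemma arc_sum_Cons: "vs \<noteq> [] \<Longrightarrow> arc_sum f (u # vs) = f (u, hd vs) + arc_sum f vs"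
  by (cases vs) simp_all

lemma arc_sum_append:
  "xs \<noteq> [] \<Longrightarrow> ys \<noteq> [] \<Longrightarrow> arc_sum f (xs @ ys) = arc_sum f xs + f (last xs, hd ys) + arc_sum f ys"
proof (induction xs rule: induct_list012)
  case (2 u)
  then show ?case by (cases ys) auto
qed simp_all

lemma arc_sum_diff: "arc_sum (\<lambda>a. f a - c * g a) vs = arc_sum f vs - c * arc_sum g vs"
  by (simp add: arc_sum_def sum_list_subtractf sum_list_const_mult)

lemma arc_sum_telescoping:
  assumes "\<forall>(i, j)\<in>set (zip vs (tl vs)). f (i, j) = \<pi> j - \<pi> i + \<beta>" and "vs \<noteq> []"
  shows "arc_sum f vs = \<pi> (last vs) - \<pi> (hd vs) + real (length vs - 1) * \<beta>"
  using assms by (induction vs rule: induct_list012) (auto simp: algebra_simps)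

lemma sum_path_arcs: "distinct vs \<Longrightarrow> sum f (path_arcs vs) = arc_sum f vs"
  unfolding path_arcs_def arc_sum_def
  by (simp add: distinct_zipI1 sum_list_distinct_conv_sum_set)

definition leaving :: "nat set \<Rightarrow> nat \<times> nat \<Rightarrow> real" where
  "leaving S a = (if fst a \<in> S \<and> snd a \<notin> S then 1 else 0)"

lemma leaving_simp [simp]: "leaving S (u, v) = (if u \<in> S \<and> v \<notin> S then 1 else 0)"
  by (simp add: leaving_def)

abbreviation crossings :: "nat set \<Rightarrow> nat list \<Rightarrow> real" where
  "crossings S \<equiv> arc_sum (leaving S)"

lemma crossings_inside: "set xs \<subseteq> S \<Longrightarrow> crossings S xs = 0"
  by (induction xs rule: induct_list012) auto

lemma crossings_outside: "set xs \<inter> S = {} \<Longrightarrow> crossings S xs = 0"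
  by (induction xs rule: induct_list012) auto

lemma crossings_three_blocks:
  assumes "A \<noteq> []" "B \<noteq> []" "C \<noteq> []" "set A \<subseteq> S" "set B \<inter> S = {}" "set C \<subseteq> S"
  shows "crossings S (A @ B @ C) = 1"
  using assms
  by (simp add: arc_sum_append crossings_inside crossings_outside subset_iff disjoint_iff)

lemma one_le_crossings: "hd xs \<in> S \<Longrightarrow> x \<in> set xs \<Longrightarrow> x \<notin> S \<Longrightarrow> 1 \<le> crossings S xs"
proof (induction xs rule: induct_list012)
  case (3 u v xs)
  have "0 \<le> crossings S (v # xs)"
    unfolding arc_sum_def by (rule sum_list_nonneg) (auto simp: leaving_def)
  then show ?case using 3 by (cases "v \<in> S") auto
qed auto

lemma set_zip_tl_subset_iff:
  "set (zip xs (tl xs)) \<subseteq> A \<longleftrightarrow> successively (\<lambda>u v. (u, v) \<in> A) xs"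
  by (induction xs rule: induct_list012) auto

lemma is_pPathI:
  assumes "distinct ws" and "set ws \<subseteq> {0<..<n}" and "length ws = p - 1" and "2 \<le> p"
  shows "is_pPath n p (0 # ws @ [n])"
proof -
  have "ws \<noteq> []" using assms(3,4) by auto
  have "successively (\<lambda>u v. (u, v) \<in> arcs n) ws"
    using assms(1,2) by (induction ws rule: induct_list012) (auto simp: arcs_def)
  moreover have "hd ws \<in> {0<..<n}" "last ws \<in> {0<..<n}"
    using \<open>ws \<noteq> []\<close> assms(2) hd_in_set last_in_set by blast+
  then have "(0, hd ws) \<in> arcs n" "(last ws, n) \<in> arcs n"
    by (auto simp: arcs_def)
  ultimately have "set (zip (0 # ws @ [n]) (tl (0 # ws @ [n]))) \<subseteq> arcs n"
    using \<open>ws \<noteq> []\<close> unfolding set_zip_tl_subset_iff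
    by (simp add: successively_append_iff successively_Cons)
  moreover have "distinct (0 # ws @ [n])"
    using assms(1,2) \<open>hd ws \<in> {0<..<n}\<close> by auto
  ultimately show ?thesis
    using assms(3,4) by (simp add: is_pPath_def)
qed

lemma is_pPathE:
  assumes "is_pPath n p vs" and "1 \<le> p"
  obtains ws where "vs = 0 # ws @ [n]" and "length ws = p - 1"
proof -
  have vs: "length vs = p + 1" "hd vs = 0" "last vs = n"
    using assms(1) by (auto simp: is_pPath_def)
  then obtain rest where rest: "vs = 0 # rest"
    by (cases vs) auto
  with vs(1) assms(2) have "rest \<noteq> []"
    by auto
  then have "rest = butlast rest @ [n]"
    using vs(3) rest by (metis append_butlast_last_id last_ConsR)
  then show thesis
    using that[of "butlast rest"] rest vs(1) by simp
qed

lemma finite_arcs: "finite (arcs n)"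
  by (rule finite_subset[of _ "{0..n} \<times> {0..n}"]) (auto simp: arcs_def)

lemma path_arcs_subset_arcs: "is_pPath n p vs \<Longrightarrow> path_arcs vs \<subseteq> arcs n"
  by (simp add: is_pPath_def path_arcs_def)

section \<open>Paths crossing the cut\<close>

lemma obtain_two_elements:
  assumes "2 \<le> card A"
  obtains a b where "a \<in> A" "b \<in> A" "a \<noteq> b"
proof -
  have "finite A" using assms card.infinite by force
  then show thesis using assms that card_le_Suc0_iff_eq[of A] by fastforce
qed

locale p_path_cut =
  fixes n p :: nat and S :: "nat set"
  assumes four_le_p: "4 \<le> p" and p_le: "p \<le> n - 1"
    and S_subset: "S \<subseteq> {0..n}" and zero_in_S: "0 \<in> S" and n_in_S: "n \<in> S"
begin

definition S_inner :: "nat set" where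
  "S_inner = {v. 0 < v \<and> v < n \<and> v \<in> S}"

definition T_inner :: "nat set" where
  "T_inner = {v. 0 < v \<and> v < n \<and> v \<notin> S}"

lemma mem_S_inner [simp]: "v \<in> S_inner \<longleftrightarrow> 0 < v \<and> v < n \<and> v \<in> S"
  and mem_T_inner [simp]: "v \<in> T_inner \<longleftrightarrow> 0 < v \<and> v < n \<and> v \<notin> S"
  by (simp_all add: S_inner_def T_inner_def)

definition one_crossing_path :: "nat list \<Rightarrow> bool" where
  "one_crossing_path vs \<longleftrightarrow> is_pPath n p vs \<and> crossings S vs = 1"

lemma five_le_n: "5 \<le> n"
  using four_le_p p_le by simp

lemma finite_S_inner: "finite S_inner"
  and finite_T_inner: "finite T_inner"
  by (rule finite_subset[of _ "{..<n}"]; auto)+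

lemma card_T_inner_S_inner: "card T_inner + card S_inner = n - 1"
proof -
  have "T_inner \<union> S_inner = {0<..<n}" "T_inner \<inter> S_inner = {}"
    by auto
  then show ?thesis
    using card_Un_disjoint[OF finite_T_inner finite_S_inner] by simp
qed

lemma S_eq: "S = insert 0 (insert n S_inner)"
  using S_subset zero_in_S n_in_S by auto

lemma card_S_inner: "card S_inner = card S - 2"
proof -
  have "card (insert 0 (insert n S_inner)) = card S_inner + 2"
    using finite_S_inner five_le_n by simp
  then show ?thesis using S_eq by simp
qed

lemma two_le_card_T_inner:
  assumes "card S \<le> p"
  shows "2 \<le> card T_inner"
proof -
  have "card S_inner \<le> p - 2"
    using card_S_inner assms by simp
  then show ?thesis
    using card_T_inner_S_inner four_le_p p_le by linarith
qed

lemma obtain_padding: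
  assumes "length es + r \<le> n - 1"
  obtains t s where "distinct (t @ s)" "set (t @ s) \<subseteq> {0<..<n} - set es"
    "set t \<inter> S = {}" "set s \<subseteq> S" "length t + length s = r"
proof -
  let ?E = "set es"
  have "card {0<..<n} - card ?E \<le> card ({0<..<n} - ?E)"
    by (rule diff_card_le_card_Diff) simp
  moreover have "{0<..<n} - ?E = (T_inner - ?E) \<union> (S_inner - ?E)"
    by auto
  moreover have "card ((T_inner - ?E) \<union> (S_inner - ?E)) = card (T_inner - ?E) + card (S_inner - ?E)"
    using finite_T_inner finite_S_inner by (intro card_Un_disjoint) auto
  ultimately have "r \<le> card (T_inner - ?E) + card (S_inner - ?E)"
    using assms card_length[of es] by simp
  define t where "t = take r (sorted_list_of_set (T_inner - ?E))"
  define s where "s = take (r - length t) (sorted_list_of_set (S_inner - ?E))"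
  have "length t + length s = r"
    using \<open>r \<le> _\<close> finite_T_inner finite_S_inner by (auto simp: t_def s_def min_def)
  moreover have "set t \<subseteq> T_inner - ?E" "set s \<subseteq> S_inner - ?E"
    using finite_T_inner finite_S_inner by (auto simp: t_def s_def dest: in_set_takeD)
  moreover have "distinct t" "distinct s"
    by (simp_all add: t_def s_def)
  ultimately show thesis
    using that[of t s] by fastforce
qed

lemma one_crossing_pathI:
  assumes "distinct ws" and "set ws \<subseteq> {0<..<n}" and "length ws = p - 1"
    and "ws = A @ B @ C" and "set A \<subseteq> S" and "B \<noteq> []" and "set B \<inter> S = {}" and "set C \<subseteq> S"
  shows "one_crossing_path (0 # ws @ [n])"
proof -
  have "crossings S ((0 # A) @ B @ (C @ [n])) = 1"
    using assms(5-8) zero_in_S n_in_S by (intro crossings_three_blocks) auto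
  moreover have "is_pPath n p (0 # ws @ [n])"
    using assms(1-3) four_le_p by (intro is_pPathI) auto
  ultimately show ?thesis
    using assms(4) by (simp add: one_crossing_path_def)
qed

lemma exists_path_without_crossing:
  assumes "p < card S"
  obtains vs where "is_pPath n p vs" "crossings S vs = 0"
proof -
  define ws where "ws = take (p - 1) (sorted_list_of_set S_inner)"
  have "set ws \<subseteq> S_inner"
    using finite_S_inner by (auto simp: ws_def dest: in_set_takeD)
  moreover have "length ws = p - 1"
    using assms card_S_inner finite_S_inner by (simp add: ws_def)
  ultimately have "is_pPath n p (0 # ws @ [n])" "crossings S (0 # ws @ [n]) = 0"
    using four_le_p zero_in_S n_in_S
    by (auto intro!: is_pPathI crossings_inside simp: ws_def)
  then show thesis by (rule that)
qed

lemma exists_one_crossing_path: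
  assumes "card S \<le> p"
  obtains vs where "one_crossing_path vs"
proof -
  obtain z where z: "z \<in> T_inner"
    using two_le_card_T_inner[OF assms] by (auto elim: obtain_two_elements)
  have "length [z] + (p - 2) \<le> n - 1"
    using four_le_p p_le by simp
  then obtain t s where ts: "distinct (t @ s)" "set (t @ s) \<subseteq> {0<..<n} - {z}"
    "set t \<inter> S = {}" "set s \<subseteq> S" "length t + length s = p - 2"
    by (rule obtain_padding) auto
  have "one_crossing_path (0 # (z # t @ s) @ [n])"
    by (rule one_crossing_pathI[where A = "[]" and B = "z # t" and C = s])
      (use z ts four_le_p in auto)
  then show thesis by (rule that)
qed

lemma exists_path_with_two_crossings:
  assumes "3 \<le> card S" and "card S \<le> p"
  obtains vs where "is_pPath n p vs" "crossings S vs = 2"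
proof -
  have "S_inner \<noteq> {}"
    using assms(1) card_S_inner by fastforce
  then obtain m where m: "m \<in> S_inner" by blast
  obtain y1 y2 where y: "y1 \<in> T_inner" "y2 \<in> T_inner" "y1 \<noteq> y2"
    using two_le_card_T_inner[OF assms(2)] by (rule obtain_two_elements)
  have "length [y1, m, y2] + (p - 4) \<le> n - 1"
    using four_le_p p_le by simp
  then obtain t s where ts: "distinct (t @ s)" "set (t @ s) \<subseteq> {0<..<n} - {y1, m, y2}"
    "set t \<inter> S = {}" "set s \<subseteq> S" "length t + length s = p - 4"
    by (rule obtain_padding) auto
  let ?ws = "y1 # m # y2 # t @ s"
  have "is_pPath n p (0 # ?ws @ [n])"
    using m y ts four_le_p by (intro is_pPathI) auto
  moreover have "crossings S ([m] @ (y2 # t) @ (s @ [n])) = 1"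
    using m y ts n_in_S by (intro crossings_three_blocks) auto
  then have "crossings S (0 # ?ws @ [n]) = 2"
    using m y zero_in_S by simp
  ultimately show thesis by (rule that)
qed

lemma one_le_crossings_if_card_le:
  assumes "card S \<le> p" and "is_pPath n p vs"
  shows "1 \<le> crossings S vs"
proof -
  have vs: "length vs = p + 1" "distinct vs" "hd vs = 0"
    using assms(2) by (auto simp: is_pPath_def)
  have "\<not> set vs \<subseteq> S"
  proof
    assume "set vs \<subseteq> S"
    then have "card (set vs) \<le> card S"
      using S_subset by (meson card_mono finite_atLeastAtMost finite_subset)
    then show False
      using vs assms(1) distinct_card by fastforce
  qed
  then obtain x where "x \<in> set vs" "x \<notin> S" by blast
  then show ?thesis
    using one_le_crossings vs(3) zero_in_S by simp
qed

lemma crossings_eq_1_if_card_le_2: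
  assumes "card S \<le> 2" and "is_pPath n p vs"
  shows "crossings S vs = 1"
proof -
  have "S_inner = {}"
    using assms(1) card_S_inner finite_S_inner by simp
  then have "S = {0, n}"
    using S_eq by simp
  obtain ws where ws: "vs = 0 # ws @ [n]" "length ws = p - 1"
    using assms(2) four_le_p by (elim is_pPathE) auto
  moreover have "distinct vs"
    using assms(2) by (simp add: is_pPath_def)
  ultimately have "crossings S ([0] @ ws @ [n]) = 1"
    using \<open>S = {0, n}\<close> four_le_p by (intro crossings_three_blocks) auto
  then show ?thesis using ws by simp
qed

end

section \<open>Arc weights that are constant on paths crossing the cut once\<close>

lemma const_on_distinct_pairs:
  assumes row: "\<And>i j j'. i \<in> A \<Longrightarrow> j \<in> A \<Longrightarrow> j' \<in> A \<Longrightarrow> i \<noteq> j \<Longrightarrow> i \<noteq> j' \<Longrightarrow> f i j = f i j'"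
    and col: "\<And>i i' j. i \<in> A \<Longrightarrow> i' \<in> A \<Longrightarrow> j \<in> A \<Longrightarrow> i \<noteq> j \<Longrightarrow> i' \<noteq> j \<Longrightarrow> f i j = f i' j"
    and "3 \<le> card A"
    and "i \<in> A" "j \<in> A" "i' \<in> A" "j' \<in> A" "i \<noteq> j" "i' \<noteq> j'"
  shows "f i j = f i' j'"
proof (cases "j = i'")
  case True
  have "card {i, j} \<le> 2" by (simp add: card_insert_if)
  then have "\<not> A \<subseteq> {i, j}"
    using \<open>3 \<le> card A\<close> card_mono[of "{i, j}" A] by auto
  then obtain k where "k \<in> A" "k \<notin> {i, j}" by blast
  then show ?thesis
    using row[of i j k] col[of i i' k] row[of i' k j'] assms(4-9) True by auto
next
  case False
  then show ?thesis
    using col[of i i' j] row[of i' j j'] assms(4-9) by auto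
qed

locale one_crossing_constant = p_path_cut +
  fixes h :: "nat \<times> nat \<Rightarrow> real" and K :: real
  assumes arc_sum_one_crossing: "one_crossing_path vs \<Longrightarrow> arc_sum h vs = K"
begin

definition defect :: "nat \<Rightarrow> nat \<Rightarrow> nat \<Rightarrow> nat \<Rightarrow> real" where
  "defect x y u w = h (u, x) - h (u, y) + h (x, w) - h (y, w)"

lemma exchange_node:
  assumes "pre \<noteq> []" and "post \<noteq> []"
    and "one_crossing_path (pre @ [x] @ post)" and "one_crossing_path (pre @ [y] @ post)"
  shows "defect x y (last pre) (hd post) = 0"
  using arc_sum_one_crossing[OF assms(3)] arc_sum_one_crossing[OF assms(4)] assms(1,2)
  by (simp add: arc_sum_append arc_sum_Cons defect_def)

lemma exchange_pair:
  assumes "pre \<noteq> []" and "post \<noteq> []"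
    and "one_crossing_path (pre @ [x, y] @ post)" and "one_crossing_path (pre @ [y, x] @ post)"
  shows "h (last pre, x) + h (x, y) + h (y, hd post) = h (last pre, y) + h (y, x) + h (x, hd post)"
  using arc_sum_one_crossing[OF assms(3)] arc_sum_one_crossing[OF assms(4)] assms(1,2)
  by (simp add: arc_sum_append arc_sum_Cons)

lemma defect_S_T:
  assumes "x \<in> {0<..<n}" "y \<in> {0<..<n}" "x \<noteq> y"
    and "u \<in> S" "u < n" "u \<notin> {x, y}" and "w \<in> T_inner" "w \<notin> {x, y}"
  shows "defect x y u w = 0"
proof -
  define U where "U = (if u = 0 then [] else [u])"
  have U: "last (0 # U) = u" "set U \<subseteq> S_inner" "length U \<le> 1"
    using assms(4,5) by (auto simp: U_def)
  have "length (x # y # w # U) + (p - 3 - length U) \<le> n - 1"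
    using U(3) four_le_p p_le by simp
  then obtain t s where ts: "distinct (t @ s)" "set (t @ s) \<subseteq> {0<..<n} - set (x # y # w # U)"
    "set t \<inter> S = {}" "set s \<subseteq> S" "length t + length s = p - 3 - length U"
    by (rule obtain_padding)
  have path: "one_crossing_path (0 # (U @ v # w # t @ s) @ [n])" if "v \<in> {x, y}" for v
  proof -
    have ws: "distinct (U @ v # w # t @ s)" "set (U @ v # w # t @ s) \<subseteq> {0<..<n}"
      "length (U @ v # w # t @ s) = p - 1"
      using that assms ts U four_le_p by (auto simp: U_def)
    show ?thesis
    proof (cases "v \<in> S")
      case True
      show ?thesis
        by (rule one_crossing_pathI[OF ws, where A = "U @ [v]" and B = "w # t" and C = s])
          (use True U assms ts in auto)
    next
      case False
      show ?thesis
        by (rule one_crossing_pathI[OF ws, where A = U and B = "v # w # t" and C = s])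
          (use False U assms ts in auto)
    qed
  qed
  have "defect x y (last (0 # U)) (hd (w # t @ s @ [n])) = 0"
    by (rule exchange_node) (use path[of x] path[of y] in simp_all)
  then show ?thesis using U(1) by simp
qed

lemma defect_T_S:
  assumes "x \<in> {0<..<n}" "y \<in> {0<..<n}" "x \<noteq> y"
    and "u \<in> T_inner" "u \<notin> {x, y}" and "w \<in> S" "0 < w" "w \<notin> {x, y}"
  shows "defect x y u w = 0"
proof -
  define W where "W = (if w = n then [] else [w])"
  have W: "hd (W @ [n]) = w" "set W \<subseteq> S_inner" "length W \<le> 1"
    using assms(6,7) S_subset by (auto simp: W_def)
  have "length (x # y # u # W) + (p - 3 - length W) \<le> n - 1"
    using W(3) four_le_p p_le by simp
  then obtain t s where ts: "distinct (t @ s)" "set (t @ s) \<subseteq> {0<..<n} - set (x # y # u # W)"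
    "set t \<inter> S = {}" "set s \<subseteq> S" "length t + length s = p - 3 - length W"
    by (rule obtain_padding)
  have path: "one_crossing_path (0 # (s @ t @ u # v # W) @ [n])" if "v \<in> {x, y}" for v
  proof -
    have ws: "distinct (s @ t @ u # v # W)" "set (s @ t @ u # v # W) \<subseteq> {0<..<n}"
      "length (s @ t @ u # v # W) = p - 1"
      using that assms ts W four_le_p by (auto simp: W_def)
    show ?thesis
    proof (cases "v \<in> S")
      case True
      show ?thesis
        by (rule one_crossing_pathI[OF ws, where A = s and B = "t @ [u]" and C = "v # W"])
          (use True W assms ts in auto)
    next
      case False
      show ?thesis
        by (rule one_crossing_pathI[OF ws, where A = s and B = "t @ [u, v]" and C = W])
          (use False W assms ts in auto)
    qed
  qed
  have "defect x y (last (0 # s @ t @ [u])) (hd (W @ [n])) = 0"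
    by (rule exchange_node) (use path[of x] path[of y] in simp_all)
  then show ?thesis using W(1) by simp
qed

lemma exchange_pair_after_0:
  assumes "x \<in> {0<..<n}" "y \<in> {0<..<n}" "x \<noteq> y" "x \<in> S \<longleftrightarrow> y \<in> S"
    and "z \<in> T_inner" "z \<notin> {x, y}"
  shows "h (0, x) + h (x, y) + h (y, z) = h (0, y) + h (y, x) + h (x, z)"
proof -
  have "length [x, y, z] + (p - 4) \<le> n - 1"
    using four_le_p p_le by simp
  then obtain t s where ts: "distinct (t @ s)" "set (t @ s) \<subseteq> {0<..<n} - set [x, y, z]"
    "set t \<inter> S = {}" "set s \<subseteq> S" "length t + length s = p - 4"
    by (rule obtain_padding)
  have path: "one_crossing_path (0 # (a # b # z # t @ s) @ [n])"
    if "(a, b) \<in> {(x, y), (y, x)}" for a b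
  proof -
    have ws: "distinct (a # b # z # t @ s)" "set (a # b # z # t @ s) \<subseteq> {0<..<n}"
      "length (a # b # z # t @ s) = p - 1"
      using that assms ts four_le_p by auto
    show ?thesis
    proof (cases "a \<in> S")
      case True
      show ?thesis
        by (rule one_crossing_pathI[OF ws, where A = "[a, b]" and B = "z # t" and C = s])
          (use True that assms ts in auto)
    next
      case False
      show ?thesis
        by (rule one_crossing_pathI[OF ws, where A = "[]" and B = "a # b # z # t" and C = s])
          (use False that assms ts in auto)
    qed
  qed
  show ?thesis
    using exchange_pair[of "[0]" "z # t @ s @ [n]" x y] path[of x y] path[of y x] by simp
qed

lemma exchange_pair_before_n:
  assumes "x \<in> {0<..<n}" "y \<in> {0<..<n}" "x \<noteq> y" "x \<in> S \<longleftrightarrow> y \<in> S"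
    and "z \<in> T_inner" "z \<notin> {x, y}"
  shows "h (z, x) + h (x, y) + h (y, n) = h (z, y) + h (y, x) + h (x, n)"
proof -
  have "length [x, y, z] + (p - 4) \<le> n - 1"
    using four_le_p p_le by simp
  then obtain t s where ts: "distinct (t @ s)" "set (t @ s) \<subseteq> {0<..<n} - set [x, y, z]"
    "set t \<inter> S = {}" "set s \<subseteq> S" "length t + length s = p - 4"
    by (rule obtain_padding)
  have path: "one_crossing_path (0 # (s @ t @ [z, a, b]) @ [n])"
    if "(a, b) \<in> {(x, y), (y, x)}" for a b
  proof -
    have ws: "distinct (s @ t @ [z, a, b])" "set (s @ t @ [z, a, b]) \<subseteq> {0<..<n}"
      "length (s @ t @ [z, a, b]) = p - 1"
      using that assms ts four_le_p by auto
    show ?thesis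
    proof (cases "a \<in> S")
      case True
      show ?thesis
        by (rule one_crossing_pathI[OF ws, where A = s and B = "t @ [z]" and C = "[a, b]"])
          (use True that assms ts in auto)
    next
      case False
      show ?thesis
        by (rule one_crossing_pathI[OF ws, where A = s and B = "t @ [z, a, b]" and C = "[]"])
          (use False that assms ts in auto)
    qed
  qed
  show ?thesis
    using exchange_pair[of "0 # s @ t @ [z]" "[n]" x y] path[of x y] path[of y x] by simp
qed

lemma defect_S_S_if_T_inner_pair:
  assumes "T_inner \<subseteq> {x, y}" "x \<in> T_inner" "y \<in> T_inner" "x \<noteq> y"
    and "u \<in> S" "u < n" and "w \<in> S_inner" "u \<noteq> w"
  shows "defect x y u w = 0"
proof -
  define U where "U = (if u = 0 then [] else [u])"
  have U: "last (0 # U) = u" "set U \<subseteq> S_inner" "length U \<le> 1"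
    using assms(5,6) by (auto simp: U_def)
  have "length (x # y # w # U) + (p - 3 - length U) \<le> n - 1"
    using U(3) four_le_p p_le by simp
  then obtain t s where ts: "distinct (t @ s)" "set (t @ s) \<subseteq> {0<..<n} - set (x # y # w # U)"
    "set t \<inter> S = {}" "set s \<subseteq> S" "length t + length s = p - 3 - length U"
    by (rule obtain_padding)
  have "set t \<subseteq> T_inner - {x, y}"
    using ts(2,3) by (auto simp: subset_iff)
  also have "\<dots> = {}"
    using assms(1) by (simp only: Diff_eq_empty_iff)
  finally have "t = []" by simp
  have path: "one_crossing_path (0 # (U @ v # w # s) @ [n])" if "v \<in> {x, y}" for v
  proof -
    have ws: "distinct (U @ v # w # s)" "set (U @ v # w # s) \<subseteq> {0<..<n}"
      "length (U @ v # w # s) = p - 1"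
      using that assms ts U \<open>t = []\<close> four_le_p by (auto simp: U_def)
    show ?thesis
      by (rule one_crossing_pathI[OF ws, where A = U and B = "[v]" and C = "w # s"])
        (use that U assms ts in auto)
  qed
  have "defect x y (last (0 # U)) (hd (w # s @ [n])) = 0"
    by (rule exchange_node) (use path[of x] path[of y] in simp_all)
  then show ?thesis using U(1) by simp
qed

lemma defect_S_n_if_T_inner_pair:
  assumes "T_inner \<subseteq> {x, y}" "x \<in> T_inner" "y \<in> T_inner" "x \<noteq> y" and "u \<in> S_inner"
  shows "defect x y u n = 0"
proof -
  have "length [x, y, u] + (p - 3) \<le> n - 1"
    using four_le_p p_le by simp
  then obtain t s where ts: "distinct (t @ s)" "set (t @ s) \<subseteq> {0<..<n} - set [x, y, u]"
    "set t \<inter> S = {}" "set s \<subseteq> S" "length t + length s = p - 3"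
    by (rule obtain_padding)
  have "set t \<subseteq> T_inner - {x, y}"
    using ts(2,3) by (auto simp: subset_iff)
  also have "\<dots> = {}"
    using assms(1) by (simp only: Diff_eq_empty_iff)
  finally have "t = []" by simp
  have path: "one_crossing_path (0 # (s @ [u, v]) @ [n])" if "v \<in> {x, y}" for v
  proof -
    have ws: "distinct (s @ [u, v])" "set (s @ [u, v]) \<subseteq> {0<..<n}" "length (s @ [u, v]) = p - 1"
      using that assms ts \<open>t = []\<close> four_le_p by auto
    show ?thesis
      by (rule one_crossing_pathI[OF ws, where A = "s @ [u]" and B = "[v]" and C = "[]"])
        (use that assms ts in auto)
  qed
  show ?thesis
    using exchange_node[of "0 # s @ [u]" "[n]" x y] path[of x] path[of y] by simp
qed

definition exchangeable :: "nat \<Rightarrow> nat \<Rightarrow> bool" where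
  "exchangeable x y \<longleftrightarrow>
    (\<forall>u w. u < n \<longrightarrow> 0 < w \<longrightarrow> w \<le> n \<longrightarrow> u \<notin> {x, y} \<longrightarrow> w \<notin> {x, y} \<longrightarrow> defect x y u w = 0)"

lemma exchangeableD:
  "exchangeable x y \<Longrightarrow> u < n \<Longrightarrow> 0 < w \<Longrightarrow> w \<le> n \<Longrightarrow> u \<notin> {x, y} \<Longrightarrow> w \<notin> {x, y} \<Longrightarrow>
    defect x y u w = 0"
  by (simp add: exchangeable_def)

lemma defect_rectangle: "defect x y u w = defect x y u w' - defect x y u' w' + defect x y u' w"
  and defect_trans: "defect x y u w = defect x z u w + defect z y u w"
  and defect_commute: "defect y x u w = - defect x y u w"
  by (simp_all add: defect_def)

lemma exchangeable_commute: "exchangeable x y \<Longrightarrow> exchangeable y x"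
  unfolding exchangeable_def using defect_commute by (metis insert_commute neg_equal_0_iff_equal)

lemma defect_across_cut:
  assumes "x \<in> {0<..<n}" "y \<in> {0<..<n}" "x \<noteq> y"
    and "u < n" "u \<notin> {x, y}" "0 < w" "w \<le> n" "w \<notin> {x, y}" and "u \<in> S \<longleftrightarrow> w \<notin> S"
  shows "defect x y u w = 0"
proof (cases "u \<in> S")
  case True
  then have "w \<in> T_inner" using assms n_in_S by (cases "w = n") auto
  then show ?thesis using defect_S_T[OF assms(1-3)] True assms by blast
next
  case False
  then have "u \<in> T_inner" using assms zero_in_S by (cases "u = 0") auto
  then show ?thesis using defect_T_S[OF assms(1-3)] False assms by blast
qed

text \<open>As a function of u and w, defect x y u w has the form a(u) + b(w). It vanishes for u and w
  on different sides of the cut, so a and b are constant on each side, and then a single vanishing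
  value at a pair on one side makes it vanish everywhere.\<close>

lemma exchangeable_if_defect_same_side:
  assumes xy: "x \<in> {0<..<n}" "y \<in> {0<..<n}" "x \<noteq> y" and z: "z \<in> T_inner" "z \<notin> {x, y}"
    and u0: "u0 < n" "u0 \<notin> {x, y}" and w0: "0 < w0" "w0 \<le> n" "w0 \<notin> {x, y}"
    and "u0 \<in> S \<longleftrightarrow> w0 \<in> S" and "defect x y u0 w0 = 0"
  shows "exchangeable x y"
proof -
  let ?ok = "\<lambda>a b. a < n \<and> a \<notin> {x, y} \<and> 0 < b \<and> b \<le> n \<and> b \<notin> {x, y}"
  have mixed: "defect x y a b = 0" if "?ok a b" "a \<in> S \<longleftrightarrow> b \<notin> S" for a b
    using defect_across_cut[OF xy] that by blast
  have flip: "defect x y a b = - defect x y a' b'"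
    if "?ok a b" "?ok a' b'" "a \<in> S \<longleftrightarrow> b \<in> S" "a' \<in> S \<longleftrightarrow> b' \<in> S" "a \<in> S \<longleftrightarrow> a' \<notin> S" for a b a' b'
    using defect_rectangle[of x y a b b' a'] mixed[of a b'] mixed[of a' b] that by auto
  obtain u1 w1 where uw1: "?ok u1 w1" "u1 \<in> S \<longleftrightarrow> w1 \<in> S" "u1 \<in> S \<longleftrightarrow> u0 \<notin> S"
  proof (cases "u0 \<in> S")
    case True
    then show thesis using that[of z z] z by auto
  next
    case False
    then show thesis using that[of 0 n] xy zero_in_S n_in_S by auto
  qed
  show ?thesis unfolding exchangeable_def
  proof (intro allI impI)
    fix u w assume "u < n" "0 < w" "w \<le> n" "u \<notin> {x, y}" "w \<notin> {x, y}"
    then have uw: "?ok u w" by blast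
    consider "u \<in> S \<longleftrightarrow> w \<notin> S" | "u \<in> S \<longleftrightarrow> w \<in> S" "u \<in> S \<longleftrightarrow> u0 \<in> S"
      | "u \<in> S \<longleftrightarrow> w \<in> S" "u \<in> S \<longleftrightarrow> u0 \<notin> S"
      by blast
    then show "defect x y u w = 0"
    proof cases
      case 1
      then show ?thesis using mixed uw by blast
    next
      case 2
      then have "defect x y u w = - defect x y u1 w1" "defect x y u1 w1 = - defect x y u0 w0"
        using flip uw uw1 u0 w0 assms(11) by blast+
      then show ?thesis using assms(12) by simp
    next
      case 3
      then have "defect x y u w = - defect x y u0 w0"
        using flip uw u0 w0 assms(11) by blast
      then show ?thesis using assms(12) by simp
    qed
  qed
qed

lemma exchangeable_if_T_inner_witness:
  assumes xy: "x \<in> {0<..<n}" "y \<in> {0<..<n}" "x \<noteq> y" "x \<in> S \<longleftrightarrow> y \<in> S"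
    and z: "z \<in> T_inner" "z \<notin> {x, y}"
  shows "exchangeable x y"
proof (rule exchangeable_if_defect_same_side[OF xy(1-3) z])
  have "defect x y z n = 0"
    using defect_T_S[OF xy(1-3) z] n_in_S xy by auto
  moreover have "defect x y 0 z = 0"
    using defect_S_T[OF xy(1-3)] z zero_in_S xy by auto
  ultimately show "defect x y z z = 0"
    using exchange_pair_after_0[OF xy z] exchange_pair_before_n[OF xy z]
    by (simp add: defect_def)
qed (use z in auto)

lemma exchangeable_if_T_inner_pair:
  assumes T: "T_inner \<subseteq> {x, y}" "x \<in> T_inner" "y \<in> T_inner" "x \<noteq> y"
    and "2 \<le> card S_inner"
  shows "exchangeable x y"
proof -
  have S_S: "defect x y u w = 0" if "u \<in> S" "u < n" "w \<in> S_inner" "u \<noteq> w" for u w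
    using defect_S_S_if_T_inner_pair[OF T] that by blast
  have S_n: "defect x y u n = 0" if "u \<in> S_inner" for u
    using defect_S_n_if_T_inner_pair[OF T] that by blast
  obtain a b where ab: "a \<in> S_inner" "b \<in> S_inner" "a \<noteq> b"
    using assms(5) by (rule obtain_two_elements)
  show ?thesis unfolding exchangeable_def
  proof (intro allI impI)
    fix u w assume uw: "u < n" "0 < w" "w \<le> n" "u \<notin> {x, y}" "w \<notin> {x, y}"
    have "u \<notin> T_inner" "w \<notin> T_inner" using uw T(1) by blast+
    then have u: "u \<in> S" and w: "w = n \<or> w \<in> S_inner"
      using uw zero_in_S by (cases "u = 0", auto)
    show "defect x y u w = 0"
    proof (cases "w = n")
      case True
      show ?thesis
      proof (cases "u = 0")
        case True
        then show ?thesis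
          using \<open>w = n\<close> defect_rectangle[of x y 0 n a b] S_S[of 0 a] S_S[of b a] S_n[of b]
            ab zero_in_S
          by auto
      qed (use \<open>w = n\<close> S_n u uw in auto)
    next
      case False
      then have "w \<in> S_inner" using w by blast
      show ?thesis
      proof (cases "u = w")
        case True
        obtain c where "c \<in> S_inner" "c \<noteq> u" using ab by blast
        then show ?thesis
          using True defect_rectangle[of x y u u c 0] S_S[of u c] S_S[of 0 c] S_S[of 0 u] zero_in_S
            \<open>w \<in> S_inner\<close> by auto
      qed (use S_S u uw \<open>w \<in> S_inner\<close> in auto)
    qed
  qed
qed

lemma exchangeable_same_side:
  assumes xy: "x \<in> {0<..<n}" "y \<in> {0<..<n}" "x \<noteq> y" "x \<in> S \<longleftrightarrow> y \<in> S" and "T_inner \<noteq> {}"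
  shows "exchangeable x y"
proof (cases "T_inner \<subseteq> {x, y}")
  case True
  then have T: "x \<in> T_inner" "y \<in> T_inner"
    using xy assms(5) by auto
  have "card T_inner \<le> 2"
    using card_mono[OF _ True] card_insert_le_m1[of 2 "{y}" x] by simp
  then have "2 \<le> card S_inner"
    using card_T_inner_S_inner five_le_n by linarith
  then show ?thesis
    using exchangeable_if_T_inner_pair[OF True T xy(3)] by blast
next
  case False
  then obtain z where "z \<in> T_inner" "z \<notin> {x, y}" by blast
  then show ?thesis using exchangeable_if_T_inner_witness[OF xy] by blast
qed

lemma exchangeable_across:
  assumes base: "x0 \<in> S_inner" "y0 \<in> T_inner" "z0 \<in> T_inner" "z0 \<noteq> y0" "defect x0 y0 z0 z0 = 0"
    and x: "x \<in> S_inner" and y: "y \<in> T_inner"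
  shows "exchangeable x y"
proof -
  have T_ne: "T_inner \<noteq> {}" using base(2) by blast
  have xy0: "exchangeable x y0"
  proof (rule exchangeable_if_defect_same_side[of x y0 z0 z0 z0])
    have "defect x x0 z0 z0 = 0" if "x \<noteq> x0"
      using exchangeableD[OF exchangeable_same_side[of x x0, OF _ _ _ _ T_ne], of z0 z0] that x base
      by auto
    then show "defect x y0 z0 z0 = 0"
      using defect_trans[of x y0 z0 z0 x0] base by (cases "x = x0") auto
  qed (use x base in auto)
  show ?thesis
  proof (cases "y = y0")
    case False
    have "card {x, y, y0} \<le> 3" by (simp add: card_insert_if)
    then have "\<not> {0<..<n} \<subseteq> {x, y, y0}"
      using card_mono[of "{x, y, y0}" "{0<..<n}"] five_le_n by auto
    then obtain z where z: "z \<in> {0<..<n}" "z \<notin> {x, y, y0}" by blast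
    have "defect y0 y z z = 0"
      using exchangeableD[OF exchangeable_same_side[of y0 y, OF _ _ _ _ T_ne], of z z]
        False z y base
      by auto
    moreover have "defect x y0 z z = 0"
      using exchangeableD[OF xy0, of z z] z by auto
    ultimately have "defect x y z z = 0"
      using defect_trans[of x y z z y0] by simp
    then show ?thesis
      using exchangeable_if_defect_same_side[of x y y0 z z] False x y z base by auto
  qed (use xy0 in simp)
qed

lemma exchangeable_all:
  assumes base: "x0 \<in> S_inner" "y0 \<in> T_inner" "z0 \<in> T_inner" "z0 \<noteq> y0" "defect x0 y0 z0 z0 = 0"
    and xy: "x \<in> {0<..<n}" "y \<in> {0<..<n}" "x \<noteq> y"
  shows "exchangeable x y"
proof -
  consider "x \<in> S \<longleftrightarrow> y \<in> S" | "x \<in> S_inner" "y \<in> T_inner" | "y \<in> S_inner" "x \<in> T_inner"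
    using xy by auto
  then show ?thesis
  proof cases
    case 1
    then show ?thesis using exchangeable_same_side xy base(2) by blast
  next
    case 2
    then show ?thesis using exchangeable_across[OF base] by blast
  next
    case 3
    then show ?thesis using exchangeable_across[OF base] exchangeable_commute by blast
  qed
qed

lemma exchangeable_imp_potential:
  assumes "\<And>x y. x \<in> {0<..<n} \<Longrightarrow> y \<in> {0<..<n} \<Longrightarrow> x \<noteq> y \<Longrightarrow> exchangeable x y"
  obtains \<pi> \<beta> where "\<And>i j. (i, j) \<in> arcs n \<Longrightarrow> h (i, j) = \<pi> j - \<pi> i + \<beta>"
proof -
  have ex: "defect x y u w = 0"
    if "x \<in> {0<..<n}" "y \<in> {0<..<n}" "x \<noteq> y" "u < n" "0 < w" "w \<le> n" "u \<notin> {x, y}" "w \<notin> {x, y}"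
    for x y u w
    using exchangeableD[OF assms] that by blast
  define \<rho> where "\<rho> i j = h (i, j) + h (0, i) - h (0, j)" for i j
  have \<rho>: "\<rho> i j = \<rho> 1 2" if "i \<in> {0<..<n}" "j \<in> {0<..<n}" "i \<noteq> j" for i j
  proof (rule const_on_distinct_pairs[where A = "{0<..<n}"])
    show "\<rho> i j = \<rho> i j'" if "i \<in> {0<..<n}" "j \<in> {0<..<n}" "j' \<in> {0<..<n}" "i \<noteq> j" "i \<noteq> j'"
      for i j j'
      using ex[of j j' i n] ex[of j j' 0 n] that by (cases "j = j'") (auto simp: \<rho>_def defect_def)
    show "\<rho> i j = \<rho> i' j" if "i \<in> {0<..<n}" "i' \<in> {0<..<n}" "j \<in> {0<..<n}" "i \<noteq> j" "i' \<noteq> j"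
      for i i' j
      using ex[of i i' 0 j] that by (cases "i = i'") (auto simp: \<rho>_def defect_def)
  qed (use that five_le_n in auto)
  have \<gamma>: "h (i, n) + h (0, i) = h (1, n) + h (0, 1)" if "i \<in> {0<..<n}" for i
    using ex[of i 1 0 n] that five_le_n by (cases "i = 1") (auto simp: defect_def)
  define \<pi> where
    "\<pi> v = (if v = 0 then \<rho> 1 2 else if v = n then h (1, n) + h (0, 1) - \<rho> 1 2 else h (0, v))" for v
  have "h (i, j) = \<pi> j - \<pi> i + \<rho> 1 2" if "(i, j) \<in> arcs n" for i j
  proof -
    have ij: "i \<le> n" "j \<le> n" "i \<noteq> j" "j \<noteq> 0" "i \<noteq> n" "(i, j) \<noteq> (0, n)"
      using that by (auto simp: arcs_def)
    consider "i = 0" | "i \<noteq> 0" "j = n" | "i \<noteq> 0" "j \<noteq> n" by blast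
    then show ?thesis
    proof cases
      case 1
      then show ?thesis using ij by (simp add: \<pi>_def)
    next
      case 2
      then show ?thesis using ij \<gamma>[of i] by (simp add: \<pi>_def)
    next
      case 3
      then show ?thesis using ij \<rho>[of i j] by (simp add: \<pi>_def \<rho>_def)
    qed
  qed
  then show thesis by (rule that)
qed

end

section \<open>The min-cut inequality\<close>

lemma linear_xsum: "linear (xsum F)"
  by (rule linearI) (simp_all add: xsum_def sum.distrib scaleR_fun_def sum_distrib_left)

lemma linear_incidence_sum:
  assumes "linear g" and "finite A"
  shows "g (incidence A) = (\<Sum>e\<in>A. g (incidence {e}))"
  using assms(2)
proof (induction A rule: finite_induct)
  case empty
  have "incidence {} = 0" by (simp add: incidence_def fun_eq_iff)
  then show ?case using linear_0[OF assms(1)] by (simp only: sum.empty)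
next
  case (insert e A)
  then have "incidence (insert e A) = incidence {e} + incidence A"
    by (auto simp: incidence_def fun_eq_iff)
  then have "g (incidence (insert e A)) = g (incidence {e}) + g (incidence A)"
    using linear_add[OF assms(1)] by metis
  then show ?case using insert by simp
qed

lemma xsum_cut_incidence:
  assumes "is_pPath n p vs"
  shows "xsum (cut n S ({0..n} - S)) (incidence (path_arcs vs)) = crossings S vs"
proof -
  have arcs: "path_arcs vs \<subseteq> arcs n" and "finite (path_arcs vs)"
    using path_arcs_subset_arcs[OF assms] finite_arcs finite_subset by blast+
  have "finite (cut n S ({0..n} - S))"
    by (rule finite_subset[OF _ finite_arcs[of n]]) (auto simp: cut_def)
  then have "xsum (cut n S ({0..n} - S)) (incidence (path_arcs vs))
      = (\<Sum>a\<in>path_arcs vs. if a \<in> cut n S ({0..n} - S) then 1 else 0)"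
    using \<open>finite (path_arcs vs)\<close>
    by (simp add: xsum_def incidence_def sum.inter_restrict[symmetric] Int_commute)
  also have "\<dots> = (\<Sum>a\<in>path_arcs vs. leaving S a)"
    using arcs by (intro sum.cong) (auto simp: cut_def arcs_def leaving_def)
  also have "\<dots> = crossings S vs"
    using assms by (intro sum_path_arcs) (simp add: is_pPath_def)
  finally show ?thesis .
qed

lemma finite_path_vectors: "finite {incidence (path_arcs vs) | vs. is_pPath n p vs}"
proof (rule finite_subset)
  show "{incidence (path_arcs vs) | vs. is_pPath n p vs} \<subseteq> incidence ` Pow (arcs n)"
    using path_arcs_subset_arcs by blast
qed (simp add: finite_arcs)

context p_path_cut
begin

lemma arc_sum_affine_in_crossings:
  assumes "3 \<le> card S" and "card S \<le> p" and "\<And>vs. one_crossing_path vs \<Longrightarrow> arc_sum \<omega> vs = K"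
  obtains C \<mu> where "\<And>vs. is_pPath n p vs \<Longrightarrow> arc_sum \<omega> vs = C + \<mu> * crossings S vs"
proof -
  have "S_inner \<noteq> {}"
    using assms(1) card_S_inner by fastforce
  then obtain x0 where x0: "x0 \<in> S_inner" by blast
  obtain y0 z0 where yz0: "y0 \<in> T_inner" "z0 \<in> T_inner" "z0 \<noteq> y0"
    using two_le_card_T_inner[OF assms(2)] by (rule obtain_two_elements)
  \<comment> \<open>the defect of \<omega> at one exchange across the cut, where the cut indicator has defect 1\<close>
  define \<mu> where "\<mu> = \<omega> (z0, x0) - \<omega> (z0, y0) + \<omega> (x0, z0) - \<omega> (y0, z0)"
  define h where "h a = \<omega> a - \<mu> * leaving S a" for a
  have arc_sum_h: "arc_sum h vs = arc_sum \<omega> vs - \<mu> * crossings S vs" for vs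
    unfolding h_def by (rule arc_sum_diff)
  interpret one_crossing_constant n p S h "K - \<mu>"
    by unfold_locales (simp add: arc_sum_h assms(3) one_crossing_path_def)
  have base: "defect x0 y0 z0 z0 = 0"
    using x0 yz0 by (simp add: defect_def h_def \<mu>_def)
  obtain \<pi> \<beta> where \<pi>: "\<And>i j. (i, j) \<in> arcs n \<Longrightarrow> h (i, j) = \<pi> j - \<pi> i + \<beta>"
    by (rule exchangeable_imp_potential[OF exchangeable_all[OF x0 yz0 base]]) auto
  have "arc_sum \<omega> vs = (\<pi> n - \<pi> 0 + real p * \<beta>) + \<mu> * crossings S vs" if "is_pPath n p vs" for vs
  proof -
    have vs: "length vs = p + 1" "hd vs = 0" "last vs = n" "set (zip vs (tl vs)) \<subseteq> arcs n"
      using that by (auto simp: is_pPath_def)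
    then have "arc_sum h vs = \<pi> (last vs) - \<pi> (hd vs) + real (length vs - 1) * \<beta>"
      using \<pi> by (intro arc_sum_telescoping) auto
    then show ?thesis using vs arc_sum_h by simp
  qed
  then show thesis by (rule that)
qed

definition path_vectors :: "(nat \<times> nat \<Rightarrow> real) set" where
  "path_vectors = {incidence (path_arcs vs) | vs. is_pPath n p vs}"

abbreviation cut_value :: "(nat \<times> nat \<Rightarrow> real) \<Rightarrow> real" where
  "cut_value \<equiv> xsum (cut n S ({0..n} - S))"

lemma min_cut_valid_iff: "valid_ineq (pPathPolytope n p) (cut n S ({0..n} - S)) 1 \<longleftrightarrow> card S \<le> p"
proof
  assume valid: "valid_ineq (pPathPolytope n p) (cut n S ({0..n} - S)) 1"
  show "card S \<le> p"
  proof (rule ccontr)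
    assume "\<not> card S \<le> p"
    then have "p < card S" by simp
    then obtain vs where vs: "is_pPath n p vs" "crossings S vs = 0"
      by (rule exists_path_without_crossing)
    have "incidence (path_arcs vs) \<in> pPathPolytope n p"
      unfolding pPathPolytope_def by (rule hull_inc) (use vs(1) in blast)
    then show False
      using valid vs(2) xsum_cut_incidence[OF vs(1), where S = S] by (force simp: valid_ineq_def)
  qed
next
  assume "card S \<le> p"
  then have "path_vectors \<subseteq> cut_value -` {1..}"
    using one_le_crossings_if_card_le xsum_cut_incidence unfolding path_vectors_def by auto
  then have "convex hull path_vectors \<subseteq> cut_value -` {1..}"
    by (rule hull_minimal) (simp add: convex_linear_vimage linear_xsum)
  then show "valid_ineq (pPathPolytope n p) (cut n S ({0..n} - S)) 1"
    by (auto simp: valid_ineq_def pPathPolytope_def path_vectors_def)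
qed

lemma affine_in_cut_value_if_const_on_face:
  assumes "3 \<le> card S" and "card S \<le> p"
    and "linear g" and "\<forall>y\<in>path_vectors. cut_value y = 1 \<longrightarrow> g y = K"
  shows "\<exists>C \<mu>. \<forall>y\<in>path_vectors. g y = C + \<mu> * cut_value y"
proof -
  define \<omega> where "\<omega> e = g (incidence {e})" for e
  have g_path: "g (incidence (path_arcs vs)) = arc_sum \<omega> vs" if "is_pPath n p vs" for vs
  proof -
    have "finite (path_arcs vs)"
      using path_arcs_subset_arcs[OF that] finite_arcs finite_subset by blast
    then have "g (incidence (path_arcs vs)) = sum \<omega> (path_arcs vs)"
      unfolding \<omega>_def by (rule linear_incidence_sum[OF assms(3)])
    also have "\<dots> = arc_sum \<omega> vs"
      using that by (intro sum_path_arcs) (simp add: is_pPath_def)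
    finally show ?thesis .
  qed
  have "arc_sum \<omega> vs = K" if "one_crossing_path vs" for vs
    using that assms(4) g_path xsum_cut_incidence[where S = S]
    unfolding one_crossing_path_def path_vectors_def by force
  then obtain C \<mu> where "\<And>vs. is_pPath n p vs \<Longrightarrow> arc_sum \<omega> vs = C + \<mu> * crossings S vs"
    using arc_sum_affine_in_crossings[OF assms(1,2)] by metis
  then have "\<forall>y\<in>path_vectors. g y = C + \<mu> * cut_value y"
    using g_path xsum_cut_incidence[where S = S] unfolding path_vectors_def by force
  then show ?thesis by blast
qed

lemma min_cut_facet_iff:
  "facet_defining (pPathPolytope n p) (cut n S ({0..n} - S)) 1 \<longleftrightarrow> 3 \<le> card S \<and> card S \<le> p"
proof
  assume facet: "facet_defining (pPathPolytope n p) (cut n S ({0..n} - S)) 1"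
  have "3 \<le> card S"
  proof (rule ccontr)
    assume "\<not> 3 \<le> card S"
    then have "path_vectors \<subseteq> cut_value -` {1}"
      using crossings_eq_1_if_card_le_2 xsum_cut_incidence unfolding path_vectors_def by auto
    then have "convex hull path_vectors \<subseteq> cut_value -` {1}"
      by (rule hull_minimal) (simp add: convex_linear_vimage linear_xsum)
    then have "pPathPolytope n p \<inter> {x. cut_value x = 1} = pPathPolytope n p"
      by (auto simp: pPathPolytope_def path_vectors_def)
    then show False
      using facet by (simp add: facet_defining_def)
  qed
  then show "3 \<le> card S \<and> card S \<le> p"
    using facet min_cut_valid_iff by (simp add: facet_defining_def)
next
  assume card: "3 \<le> card S \<and> card S \<le> p"
  obtain va where va: "is_pPath n p va" "crossings S va = 1"
    using card exists_one_crossing_path unfolding one_crossing_path_def by blast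
  obtain vb where vb: "is_pPath n p vb" "crossings S vb = 2"
    using card exists_path_with_two_crossings by blast
  have "affdim (convex hull path_vectors \<inter> {x. cut_value x = 1})
      = affdim (convex hull path_vectors) - 1"
  proof (rule affdim_hyperplane_section)
    show "finite path_vectors"
      unfolding path_vectors_def by (rule finite_path_vectors)
    show "incidence (path_arcs va) \<in> path_vectors" "incidence (path_arcs vb) \<in> path_vectors"
      using va vb unfolding path_vectors_def by blast+
    show "cut_value (incidence (path_arcs va)) = 1" "cut_value (incidence (path_arcs vb)) \<noteq> 1"
      using va vb xsum_cut_incidence[OF va(1)] xsum_cut_incidence[OF vb(1)] by simp_all
  qed (use card affine_in_cut_value_if_const_on_face linear_xsum in auto)
  then show "facet_defining (pPathPolytope n p) (cut n S ({0..n} - S)) 1"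
    using min_cut_valid_iff card
    by (simp add: facet_defining_def pPathPolytope_def path_vectors_def)
qed

end

theorem theorem12:
  fixes n p :: nat and S :: "nat set"
  assumes "4 \<le> p" and "p \<le> n - 1"
    and "S \<subset> {0..n}" and "0 \<in> S" and "n \<in> S"
  shows "(valid_ineq (pPathPolytope n p) (cut n S ({0..n} - S)) 1 \<longleftrightarrow> card S \<le> p)
       \<and> (facet_defining (pPathPolytope n p) (cut n S ({0..n} - S)) 1 \<longleftrightarrow>
            3 \<le> card S \<and> card S \<le> p \<and> card ({0..n} - S) \<ge> 2)"
proof -
  interpret p_path_cut n p S
    using assms by unfold_locales auto
  have "S \<subseteq> {0..n}"
    using assms(3) by blast
  then have "card ({0..n} - S) = n + 1 - card S"
    using card_Diff_subset[of S "{0..n}"] finite_subset by auto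
  then have "2 \<le> card ({0..n} - S)" if "card S \<le> p"
    using that assms(1,2) by linarith
  then show ?thesis
    using min_cut_valid_iff min_cut_facet_iff by blast
qed

end
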